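(* Let $\Sigma_1,\Sigma_2$ be systems as in the context. If $\Sigma_1$ and $\Sigma_2$ have equivalent stochastic external behavior with respect to some subspace $\mathcal R\subseteq\mathbb R^{n_1+n_2}$, then: $(p_0)$ $\Psi_1=\Psi_2$; $(p_1)$ $C_1A_1^tB_1=C_2A_2^tB_2$ for all $t\ge0$; $(p_2)$ $C_1A_1^tG_1\mu_1=C_2A_2^tG_2\mu_2$ for all $t\ge0$; $(p_3)$ $C_1A_1^kG_1G_1^T(A_1^h)^TC_1^T=C_2A_2^kG_2G_2^T(A_2^h)^TC_2^T$ for all $h,k\ge0$.
   Context: For $i=1,2$, $\Sigma_i$ is the system $x_i(t+1)=A_ix_i(t)+B_iu(t)+G_iw_i(t)$, $y_i(t)=C_ix_i(t)+\nu_i(t)$, $t\in\mathbb{N}$, with $x_i\in\mathbb{R}^{n_i}$, $u\in\mathbb{R}^m$, $w_i\in\mathbb{R}^{l_i}$, $y_i,\nu_i\in\mathbb{R}^p$, where $(w_i(t))_t$ is i.i.d. with $w_i(t)\sim\mathcal N(\mu_i,I_{l_i})$, $(\nu_i(t))_t$ is i.i.d. with $\nu_i(t)\sim\mathcal N(0,\Psi_i)$, and the two sequences are mutually independent. For a deterministic initial state $x_i^0$ and deterministic input $\mathbf u:\mathbb N\to\mathbb R^m$, $\mathbf x_i|_{x_i^0,\mathbf u}(t)=A_i^tx_i^0+\sum_{\tau=0}^{t-1}A_i^{t-1-\tau}(B_iu(\tau)+G_iw_i(\tau))$, $\mathbf y_i|_{x_i^0,\mathbf u}(t)=C_i\mathbf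 x_i|_{x_i^0,\mathbf u}(t)+\nu_i(t)$. Processes are stochastically equivalent ($\sim$) if all finite-dimensional joint distributions coincide. For a subspace $\mathcal R\subseteq\mathbb R^{n_1}\times\mathbb R^{n_2}$, $\Sigma_1,\Sigma_2$ have equivalent stochastic external behavior with respect to $\mathcal R$ if $\mathbf y_1|_{x_1^0,\mathbf u}\sim\mathbf y_2|_{x_2^0,\mathbf u}$ for all $(x_1^0,x_2^0)\in\mathcal R$ and all inputs $\mathbf u$. *)

theory Defs
  imports "HOL-Probability.Probability"
begin

primrec mpow :: "real^'n^'n \<Rightarrow> nat \<Rightarrow> real^'n^'n" where
  "mpow A 0 = mat 1"
| "mpow A (Suc t) = A ** mpow A t"

definition gaussian_vec :: "real^'n \<Rightarrow> real^'n^'n \<Rightarrow> (real^'n) measure \<Rightarrow> bool" where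
  "gaussian_vec mu S N \<longleftrightarrow>
     prob_space N \<and> sets N = sets borel \<and> transpose S = S \<and>
     (\<forall>a. integral\<^sup>L N (\<lambda>x. cis (a \<bullet> x)) =
          cis (a \<bullet> mu) * complex_of_real (exp (- (a \<bullet> (S *v a)) / 2)))"

definition noise_model ::
  "'a measure \<Rightarrow> real^'l \<Rightarrow> real^'p^'p \<Rightarrow> (nat \<Rightarrow> 'a \<Rightarrow> real^'l) \<Rightarrow> (nat \<Rightarrow> 'a \<Rightarrow> real^'p) \<Rightarrow> bool"
  where
  "noise_model M mu Psi w nu \<longleftrightarrow>
     prob_space M \<and>
     (\<forall>t. w t \<in> borel_measurable M \<and> nu t \<in> borel_measurable M) \<and>
     (\<forall>t. gaussian_vec mu (mat 1) (distr M borel (w t))) \<and>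
     (\<forall>t. gaussian_vec 0 Psi (distr M borel (nu t))) \<and>
     prob_space.indep_vars M (\<lambda>_. borel) w UNIV \<and>
     prob_space.indep_vars M (\<lambda>_. borel) nu UNIV \<and>
     prob_space.indep_set M
       (sets (vimage_algebra (space M) (\<lambda>\<omega> t. w t \<omega>) (PiM UNIV (\<lambda>_. borel))))
       (sets (vimage_algebra (space M) (\<lambda>\<omega> t. nu t \<omega>) (PiM UNIV (\<lambda>_. borel))))"

definition state_proc ::
  "real^'n^'n \<Rightarrow> real^'m^'n \<Rightarrow> real^'l^'n \<Rightarrow> real^'n \<Rightarrow> (nat \<Rightarrow> real^'m)
   \<Rightarrow> (nat \<Rightarrow> 'a \<Rightarrow> real^'l) \<Rightarrow> nat \<Rightarrow> 'a \<Rightarrow> real^'n" where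
  "state_proc A B G x0 u w t \<omega> =
     mpow A t *v x0 + (\<Sum>\<tau><t. mpow A (t - 1 - \<tau>) *v (B *v u \<tau> + G *v w \<tau> \<omega>))"

definition output_proc ::
  "real^'n^'n \<Rightarrow> real^'m^'n \<Rightarrow> real^'l^'n \<Rightarrow> real^'n^'p \<Rightarrow> real^'n \<Rightarrow> (nat \<Rightarrow> real^'m)
   \<Rightarrow> (nat \<Rightarrow> 'a \<Rightarrow> real^'l) \<Rightarrow> (nat \<Rightarrow> 'a \<Rightarrow> real^'p) \<Rightarrow> nat \<Rightarrow> 'a \<Rightarrow> real^'p" where
  "output_proc A B G C x0 u w nu t \<omega> = C *v state_proc A B G x0 u w t \<omega> + nu t \<omega>"

definition stoch_equiv ::
  "'a measure \<Rightarrow> (nat \<Rightarrow> 'a \<Rightarrow> 'c::topological_space) \<Rightarrow> 'b measure \<Rightarrow> (nat \<Rightarrow> 'b \<Rightarrow> 'c) \<Rightarrow> bool" where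
  "stoch_equiv M1 Y1 M2 Y2 \<longleftrightarrow>
     (\<forall>J. finite J \<longrightarrow>
        distr M1 (PiM J (\<lambda>_. borel)) (\<lambda>\<omega>. \<lambda>t\<in>J. Y1 t \<omega>) =
        distr M2 (PiM J (\<lambda>_. borel)) (\<lambda>\<omega>. \<lambda>t\<in>J. Y2 t \<omega>))"

end

theory Submission
  imports Defs
begin

text \<open>Started from the zero initial state, which lies in the subspace \<open>R\<close>, every functional
  \<open>\<Sum>t\<in>J. a t \<bullet> y t\<close> of the output is a real Gaussian variable, an affine combination of the
  independent noises \<open>w \<tau>\<close> and \<open>\<nu> t\<close>; its characteristic function at \<open>1\<close> is
  \<open>cis mean * exp (- var / 2)\<close>. Stochastic equivalence equates these for the two systems, so the
  variances agree, and (using the homogeneity of the mean in \<open>a\<close>) so do the means. The variance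
  with a single time gives \<open>\<Psi>\<^sub>1 = \<Psi>\<^sub>2\<close>; the mean with zero input yields the partial
  sums of \<open>C A\<^sup>j G \<mu>\<close>, and with an impulse input at time \<open>0\<close> the Markov parameters
  \<open>C A\<^sup>k B\<close>; polarising the variance at two times \<open>s \<le> s + d\<close> yields the partial sums of
  \<open>C A\<^sup>j G (C A\<^sup>j\<^sup>+\<^sup>d G)\<^sup>T\<close>.\<close>

lemma matrix_vector_mult_sum: "A *v (\<Sum>i\<in>S. f i) = (\<Sum>i\<in>S. A *v f i)" for A :: "real^'n^'m"
  using linear_sum[OF matrix_vector_mul_linear[of A]] by simp

lemma inner_matrix_vector_mult_triple:
  "(a::real^'p) \<bullet> (C *v (M *v (G *v x))) = (transpose (C ** M ** G) *v a) \<bullet> x"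
  by (simp add: matrix_vector_mul_assoc matrix_mul_assoc) (simp add: dot_lmul_matrix inner_commute[of x])

lemma matrix_eq_bilinear: "(\<And>x y. (x::real^'p) \<bullet> (P *v y) = x \<bullet> (Q *v y)) \<Longrightarrow> P = Q"
  by (metis matrix_eq vector_eq_ldot)

lemma symmetric_matrix_inner_swap: "transpose P = P \<Longrightarrow> (y::real^'p) \<bullet> (P *v x) = x \<bullet> (P *v y)"
  by (metis dot_lmul_matrix inner_commute transpose_matrix_vector)

lemma symmetric_matrix_eq_quadratic:
  fixes P Q :: "real^'p^'p"
  assumes "transpose P = P" "transpose Q = Q" "\<And>x. x \<bullet> (P *v x) = x \<bullet> (Q *v x)"
  shows "P = Q"
proof (rule matrix_eq_bilinear)
  fix x y :: "real^'p"
  have "(x + y) \<bullet> (P *v (x + y)) = (x + y) \<bullet> (Q *v (x + y))" by (rule assms(3))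
  then have "x \<bullet> (P *v x) + x \<bullet> (P *v y) + y \<bullet> (P *v x) + y \<bullet> (P *v y) =
             x \<bullet> (Q *v x) + x \<bullet> (Q *v y) + y \<bullet> (Q *v x) + y \<bullet> (Q *v y)"
    by (simp add: matrix_vector_right_distrib inner_add_left inner_add_right)
  then show "x \<bullet> (P *v y) = x \<bullet> (Q *v y)"
    using assms(3)[of x] assms(3)[of y]
      symmetric_matrix_inner_swap[OF assms(1), of y x] symmetric_matrix_inner_swap[OF assms(2), of y x]
    by simp
qed

lemma partial_sums_eq_imp_eq:
  fixes f g :: "nat \<Rightarrow> 'a::ab_group_add"
  assumes "\<And>n. (\<Sum>i<n. f i) = (\<Sum>i<n. g i)"
  shows "f n = g n"
  using assms[of "Suc n"] assms[of n] by simp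

lemma sum_lessThan_reflect:
  "(\<Sum>\<tau><t. f (t - 1 - \<tau>)) = (\<Sum>j<(t::nat). f j :: 'a::comm_monoid_add)"
  using sum.nat_diff_reindex[where g=f and n=t] by (simp add: diff_diff_left)

lemma prod_cis: "finite S \<Longrightarrow> (\<Prod>i\<in>S. cis (f i)) = cis (\<Sum>i\<in>S. f i)"
  by (induction S rule: finite_induct) (auto simp: cis_mult)

lemma cis_mult_exp_eqD:
  assumes "cis x1 * complex_of_real (exp r1) = cis x2 * complex_of_real (exp r2)"
  shows "r1 = r2 \<and> cis x1 = cis x2"
proof -
  have "norm (cis x1 * complex_of_real (exp r1)) = norm (cis x2 * complex_of_real (exp r2))"
    using assms by simp
  then have "r1 = r2" by (simp add: norm_mult)
  then show ?thesis using assms by simp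
qed

lemma cis_scaled_eq_imp_eq:
  assumes "\<And>s::real. cis (s * x) = cis (s * y)"
  shows "x = y"
proof (rule ccontr)
  assume "x \<noteq> y"
  have "pi / (x - y) * x - pi / (x - y) * y = pi / (x - y) * (x - y)"
    by (simp only: right_diff_distrib)
  also have "\<dots> = pi"
    using \<open>x \<noteq> y\<close> by simp
  finally have "cis (pi / (x - y) * x) / cis (pi / (x - y) * y) = -1"
    by (simp add: cis_divide)
  then show False using assms[of "pi / (x - y)"] by (simp add: cis_neq_zero)
qed

lemma gaussian_vec_charfun:
  assumes "gaussian_vec mu S (distr M borel X)" "X \<in> borel_measurable M"
  shows "(\<integral>\<omega>. cis (b \<bullet> X \<omega>) \<partial>M) = cis (b \<bullet> mu) * complex_of_real (exp (- (b \<bullet> (S *v b)) / 2))"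
proof -
  have "(\<integral>\<omega>. cis (b \<bullet> X \<omega>) \<partial>M) = integral\<^sup>L (distr M borel X) (\<lambda>x. cis (b \<bullet> x))"
    by (subst integral_distr) (use assms(2) in \<open>auto intro!: borel_measurable_continuous_onI continuous_intros\<close>)
  then show ?thesis using assms(1) unfolding gaussian_vec_def by auto
qed

lemma integrable_cis: "prob_space M \<Longrightarrow> f \<in> borel_measurable M \<Longrightarrow> integrable M (\<lambda>\<omega>. cis (f \<omega>))"
proof (rule finite_measure.integrable_const_bound[where B=1])
  assume "prob_space M" "f \<in> borel_measurable M"
  then show "finite_measure M" by (simp add: prob_space.finite_measure)
  show "(\<lambda>\<omega>. cis (f \<omega>)) \<in> borel_measurable M"
    by (rule measurable_compose[where f=f and g=cis, OF \<open>f \<in> borel_measurable M\<close>])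
       (auto intro!: borel_measurable_continuous_onI continuous_intros)
qed auto

lemma measurable_cis_inner_sum:
  fixes d :: "'i \<Rightarrow> real^'k"
  assumes "I \<subseteq> K"
  shows "(\<lambda>g. cis (\<Sum>t\<in>I. d t \<bullet> g t)) \<in> PiM K (\<lambda>_. borel) \<rightarrow>\<^sub>M (borel :: complex measure)"
  by (rule measurable_compose[where g=cis, OF _ borel_measurable_continuous_onI])
    (use assms in \<open>auto intro!: borel_measurable_sum borel_measurable_inner measurable_component_singleton continuous_intros\<close>)

lemma sigma_sets_vimage_compose_subset:
  assumes W: "W \<in> M \<rightarrow>\<^sub>M P" and f: "f \<in> P \<rightarrow>\<^sub>M N"
  shows "sigma_sets (space M) {(\<lambda>\<omega>. f (W \<omega>)) -` A \<inter> space M | A. A \<in> sets N}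
      \<subseteq> sets (vimage_algebra (space M) W P)"
proof -
  have "{(\<lambda>\<omega>. f (W \<omega>)) -` A \<inter> space M | A. A \<in> sets N} \<subseteq> sets (vimage_algebra (space M) W P)"
  proof
    fix S assume "S \<in> {(\<lambda>\<omega>. f (W \<omega>)) -` A \<inter> space M | A. A \<in> sets N}"
    then obtain A where A: "A \<in> sets N" "S = (\<lambda>\<omega>. f (W \<omega>)) -` A \<inter> space M" by auto
    have "S = W -` (f -` A \<inter> space P) \<inter> space M" using A measurable_space[OF W] by auto
    moreover have "f -` A \<inter> space P \<in> sets P" using A f by (auto intro: measurable_sets)
    moreover have "sets (vimage_algebra (space M) W P) = {W -` A \<inter> space M | A. A \<in> sets P}"
      by (rule sets_vimage_algebra2) (use measurable_space[OF W] in auto)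
    ultimately show "S \<in> sets (vimage_algebra (space M) W P)"
      by blast
  qed
  then show ?thesis
    using sets.sigma_sets_subset[of _ "vimage_algebra (space M) W P"] by simp
qed

lemma (in prob_space) indep_var_compose_vimage:
  assumes "indep_set (sets (vimage_algebra (space M) W P)) (sets (vimage_algebra (space M) V Q))"
    and W: "W \<in> M \<rightarrow>\<^sub>M P" and V: "V \<in> M \<rightarrow>\<^sub>M Q"
    and f: "f \<in> P \<rightarrow>\<^sub>M N" and g: "g \<in> Q \<rightarrow>\<^sub>M N"
  shows "indep_var N (\<lambda>\<omega>. f (W \<omega>)) N (\<lambda>\<omega>. g (V \<omega>))"
proof -
  have "random_variable N (\<lambda>\<omega>. f (W \<omega>))" "random_variable N (\<lambda>\<omega>. g (V \<omega>))"
    using W f V g by measurable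
  then show ?thesis
    using assms(1) sigma_sets_vimage_compose_subset[OF W f] sigma_sets_vimage_compose_subset[OF V g]
    unfolding indep_var_eq indep_sets2_eq by blast
qed

lemma (in prob_space) charfun_sum_indep_gaussian:
  fixes X :: "nat \<Rightarrow> 'a \<Rightarrow> real^'n"
  assumes ind: "indep_vars (\<lambda>_. borel) X UNIV" and mX: "\<And>t. X t \<in> borel_measurable M"
    and g: "\<And>t. gaussian_vec m S (distr M borel (X t))" and I: "finite I"
  shows "(\<integral>\<omega>. cis (\<Sum>i\<in>I. b i \<bullet> X i \<omega>) \<partial>M) =
     cis (\<Sum>i\<in>I. b i \<bullet> m) * complex_of_real (exp (- (\<Sum>i\<in>I. b i \<bullet> (S *v b i)) / 2))"
proof -
  have "(\<lambda>x. cis (b i \<bullet> x)) \<in> borel_measurable borel" for i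
    by (auto intro!: borel_measurable_continuous_onI continuous_intros)
  then have ind_cis: "indep_vars (\<lambda>_. borel) (\<lambda>i \<omega>. cis (b i \<bullet> X i \<omega>)) I"
    using indep_vars_subset[OF indep_vars_compose2[OF ind, of "\<lambda>i x. cis (b i \<bullet> x)" "\<lambda>_. borel"]]
    by auto
  have "(\<integral>\<omega>. cis (\<Sum>i\<in>I. b i \<bullet> X i \<omega>) \<partial>M) = (\<integral>\<omega>. (\<Prod>i\<in>I. cis (b i \<bullet> X i \<omega>)) \<partial>M)"
    by (simp add: prod_cis[OF I])
  also have "\<dots> = (\<Prod>i\<in>I. \<integral>\<omega>. cis (b i \<bullet> X i \<omega>) \<partial>M)"
    by (rule indep_vars_lebesgue_integral[OF I ind_cis])
       (auto intro!: integrable_cis prob_space_axioms borel_measurable_inner mX)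
  also have "\<dots> = (\<Prod>i\<in>I. cis (b i \<bullet> m) * complex_of_real (exp (- (b i \<bullet> (S *v b i)) / 2)))"
    by (rule prod.cong[OF refl], rule gaussian_vec_charfun[OF g mX])
  also have "\<dots> = cis (\<Sum>i\<in>I. b i \<bullet> m) * complex_of_real (exp (\<Sum>i\<in>I. - (b i \<bullet> (S *v b i)) / 2))"
    by (simp add: prod.distrib prod_cis[OF I] exp_sum[OF I])
  finally show ?thesis
    by (simp add: sum_negf sum_divide_distrib)
qed

definition noise_gain ::
  "real^'n^'n \<Rightarrow> real^'l^'n \<Rightarrow> real^'n^'p \<Rightarrow> nat set \<Rightarrow> (nat \<Rightarrow> real^'p) \<Rightarrow> nat \<Rightarrow> real^'l"
  where "noise_gain A G C J a \<tau> =
    (\<Sum>t\<in>J. if \<tau> < t then transpose (C ** mpow A (t - 1 - \<tau>) ** G) *v a t else 0)"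

definition noise_gain_cross ::
  "real^'n^'n \<Rightarrow> real^'l^'n \<Rightarrow> real^'n^'p \<Rightarrow> nat set \<Rightarrow> nat \<Rightarrow> (nat \<Rightarrow> real^'p) \<Rightarrow> (nat \<Rightarrow> real^'p) \<Rightarrow> real"
  where "noise_gain_cross A G C J N a a' = (\<Sum>\<tau><N. noise_gain A G C J a \<tau> \<bullet> noise_gain A G C J a' \<tau>)"

text \<open>Mean and variance of the Gaussian variable \<open>\<Sum>t\<in>J. a t \<bullet> y t\<close>, for the output \<open>y\<close>
  from the zero initial state and \<open>J \<subseteq> {..N}\<close>.\<close>

definition output_functional_mean ::
  "real^'n^'n \<Rightarrow> real^'m^'n \<Rightarrow> real^'l^'n \<Rightarrow> real^'n^'p \<Rightarrow> real^'l \<Rightarrow> nat set \<Rightarrow> nat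
   \<Rightarrow> (nat \<Rightarrow> real^'p) \<Rightarrow> (nat \<Rightarrow> real^'m) \<Rightarrow> real"
  where "output_functional_mean A B G C mu J N a u =
    (\<Sum>t\<in>J. a t \<bullet> (C *v (\<Sum>\<tau><t. mpow A (t - 1 - \<tau>) *v (B *v u \<tau>))))
    + (\<Sum>\<tau><N. noise_gain A G C J a \<tau> \<bullet> mu)"

definition output_functional_var ::
  "real^'n^'n \<Rightarrow> real^'l^'n \<Rightarrow> real^'n^'p \<Rightarrow> real^'p^'p \<Rightarrow> nat set \<Rightarrow> nat \<Rightarrow> (nat \<Rightarrow> real^'p) \<Rightarrow> real"
  where "output_functional_var A G C Psi J N a =
    noise_gain_cross A G C J N a a + (\<Sum>t\<in>J. a t \<bullet> (Psi *v a t))"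

lemma sum_lessThan_extend:
  "t \<le> (N::nat) \<Longrightarrow> (\<Sum>\<tau><t. f \<tau>) = (\<Sum>\<tau><N. if \<tau> < t then f \<tau> else (0::'b::comm_monoid_add))"
  by (rule sum.mono_neutral_cong_left) auto

lemma output_functional_eq:
  assumes N: "\<forall>t\<in>J. t \<le> N"
  shows "(\<Sum>t\<in>J. a t \<bullet> output_proc A B G C 0 u w nu t \<omega>) =
    (\<Sum>t\<in>J. a t \<bullet> (C *v (\<Sum>\<tau><t. mpow A (t - 1 - \<tau>) *v (B *v u \<tau>))))
    + (\<Sum>\<tau><N. noise_gain A G C J a \<tau> \<bullet> w \<tau> \<omega>) + (\<Sum>t\<in>J. a t \<bullet> nu t \<omega>)"
proof -
  let ?Q = "\<lambda>t \<tau>. transpose (C ** mpow A (t - 1 - \<tau>) ** G)"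
  have single: "a t \<bullet> output_proc A B G C 0 u w nu t \<omega> =
     a t \<bullet> (C *v (\<Sum>\<tau><t. mpow A (t - 1 - \<tau>) *v (B *v u \<tau>)))
     + (\<Sum>\<tau><t. (?Q t \<tau> *v a t) \<bullet> w \<tau> \<omega>) + a t \<bullet> nu t \<omega>" for t
    by (simp add: output_proc_def state_proc_def matrix_vector_right_distrib sum.distrib
        matrix_vector_mult_sum inner_add_right inner_sum_right inner_matrix_vector_mult_triple)
  have "(\<Sum>t\<in>J. \<Sum>\<tau><t. (?Q t \<tau> *v a t) \<bullet> w \<tau> \<omega>)
      = (\<Sum>t\<in>J. \<Sum>\<tau><N. (if \<tau> < t then ?Q t \<tau> *v a t else 0) \<bullet> w \<tau> \<omega>)"
  proof (rule sum.cong[OF refl])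
    fix t assume "t \<in> J"
    then show "(\<Sum>\<tau><t. (?Q t \<tau> *v a t) \<bullet> w \<tau> \<omega>)
      = (\<Sum>\<tau><N. (if \<tau> < t then ?Q t \<tau> *v a t else 0) \<bullet> w \<tau> \<omega>)"
      using N by (subst sum_lessThan_extend[of t N]) (auto intro: sum.cong)
  qed
  also have "\<dots> = (\<Sum>\<tau><N. \<Sum>t\<in>J. (if \<tau> < t then ?Q t \<tau> *v a t else 0) \<bullet> w \<tau> \<omega>)"
    by (rule sum.swap)
  also have "\<dots> = (\<Sum>\<tau><N. noise_gain A G C J a \<tau> \<bullet> w \<tau> \<omega>)"
    unfolding noise_gain_def inner_sum_left by (intro sum.cong refl)
  finally show ?thesis
    by (simp only: single sum.distrib)
qed

lemma output_functional_charfun: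
  fixes M :: "'a measure" and A :: "real^'n^'n" and B :: "real^'m^'n" and G :: "real^'l^'n"
    and C :: "real^'n^'p" and mu :: "real^'l" and Psi :: "real^'p^'p"
    and w :: "nat \<Rightarrow> 'a \<Rightarrow> real^'l" and nu :: "nat \<Rightarrow> 'a \<Rightarrow> real^'p"
  assumes noise: "noise_model M mu Psi w nu" and J: "finite J" and N: "\<forall>t\<in>J. t \<le> N"
  shows "(\<integral>\<omega>. cis (\<Sum>t\<in>J. a t \<bullet> output_proc A B G C 0 u w nu t \<omega>) \<partial>M) =
    cis (output_functional_mean A B G C mu J N a u)
    * complex_of_real (exp (- output_functional_var A G C Psi J N a / 2))"
proof -
  interpret prob_space M using noise unfolding noise_model_def by auto
  have mw: "\<And>t. w t \<in> borel_measurable M" and mnu: "\<And>t. nu t \<in> borel_measurable M"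
    and gw: "\<And>t. gaussian_vec mu (mat 1) (distr M borel (w t))"
    and gnu: "\<And>t. gaussian_vec 0 Psi (distr M borel (nu t))"
    and iw: "indep_vars (\<lambda>_. borel) w UNIV" and inu: "indep_vars (\<lambda>_. borel) nu UNIV"
    and iwnu: "indep_set
       (sets (vimage_algebra (space M) (\<lambda>\<omega> t. w t \<omega>) (PiM UNIV (\<lambda>_. borel))))
       (sets (vimage_algebra (space M) (\<lambda>\<omega> t. nu t \<omega>) (PiM UNIV (\<lambda>_. borel))))"
    using noise unfolding noise_model_def by auto
  define c where "c = (\<Sum>t\<in>J. a t \<bullet> (C *v (\<Sum>\<tau><t. mpow A (t - 1 - \<tau>) *v (B *v u \<tau>))))"
  define b where "b = noise_gain A G C J a"
  have W: "(\<lambda>\<omega> t. w t \<omega>) \<in> M \<rightarrow>\<^sub>M PiM UNIV (\<lambda>_. borel)"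
    by (rule measurable_PiM_single') (auto simp: mw measurable_space)
  have V: "(\<lambda>\<omega> t. nu t \<omega>) \<in> M \<rightarrow>\<^sub>M PiM UNIV (\<lambda>_. borel)"
    by (rule measurable_PiM_single') (auto simp: mnu measurable_space)
  have ind: "indep_var borel (\<lambda>\<omega>. cis (\<Sum>\<tau><N. b \<tau> \<bullet> w \<tau> \<omega>)) borel (\<lambda>\<omega>. cis (\<Sum>t\<in>J. a t \<bullet> nu t \<omega>))"
    using indep_var_compose_vimage[OF iwnu W V measurable_cis_inner_sum measurable_cis_inner_sum] by simp
  have "(\<integral>\<omega>. cis (\<Sum>t\<in>J. a t \<bullet> output_proc A B G C 0 u w nu t \<omega>) \<partial>M) =
     (\<integral>\<omega>. cis c * (cis (\<Sum>\<tau><N. b \<tau> \<bullet> w \<tau> \<omega>) * cis (\<Sum>t\<in>J. a t \<bullet> nu t \<omega>)) \<partial>M)"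
    unfolding output_functional_eq[OF N] c_def b_def by (simp only: cis_mult add.assoc)
  also have "\<dots> = cis c * ((\<integral>\<omega>. cis (\<Sum>\<tau><N. b \<tau> \<bullet> w \<tau> \<omega>) \<partial>M) * (\<integral>\<omega>. cis (\<Sum>t\<in>J. a t \<bullet> nu t \<omega>) \<partial>M))"
    by (subst integral_mult_right_zero, subst indep_var_lebesgue_integral[OF ind])
       (auto intro!: integrable_cis prob_space_axioms borel_measurable_sum borel_measurable_inner mw mnu)
  also have "\<dots> = cis c * (cis (\<Sum>\<tau><N. b \<tau> \<bullet> mu) * complex_of_real (exp (- noise_gain_cross A G C J N a a / 2))
      * complex_of_real (exp (- (\<Sum>t\<in>J. a t \<bullet> (Psi *v a t)) / 2)))"
    by (simp add: charfun_sum_indep_gaussian[OF iw mw gw] charfun_sum_indep_gaussian[OF inu mnu gnu J]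
        noise_gain_cross_def b_def)
  also have "\<dots> = cis (output_functional_mean A B G C mu J N a u)
    * complex_of_real (exp (- output_functional_var A G C Psi J N a / 2))"
  proof -
    have "exp (- (x + y) / 2) = exp (- x / 2) * exp (- y / 2)" for x y :: real
      by (simp add: exp_add[symmetric] add_divide_distrib)
    then show ?thesis
      unfolding output_functional_var_def
      by (simp add: output_functional_mean_def c_def b_def cis_mult[symmetric] mult_ac)
  qed
  finally show ?thesis .
qed

lemma borel_measurable_output_proc:
  assumes "\<And>t. w t \<in> borel_measurable M" "\<And>t. nu t \<in> borel_measurable M"
  shows "output_proc A B G C x0 u w nu t \<in> borel_measurable M"
proof -
  have "(\<lambda>x. F *v x) \<in> borel_measurable borel" for F :: "real^'k^'j"
    by (auto intro!: borel_measurable_continuous_onI continuous_intros)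
  then have "(\<lambda>\<omega>. output_proc A B G C x0 u w nu t \<omega>) \<in> borel_measurable M"
    unfolding output_proc_def state_proc_def
    by (intro borel_measurable_add measurable_compose[OF _ \<open>(\<lambda>x. _ *v x) \<in> _\<close>]
        borel_measurable_sum borel_measurable_const assms)
  then show ?thesis by simp
qed

lemma stoch_equiv_charfun_eq:
  fixes Y1 :: "nat \<Rightarrow> 'a \<Rightarrow> real^'p" and Y2 :: "nat \<Rightarrow> 'b \<Rightarrow> real^'p"
  assumes eq: "stoch_equiv M1 Y1 M2 Y2" and J: "finite J"
    and m1: "\<And>t. Y1 t \<in> borel_measurable M1" and m2: "\<And>t. Y2 t \<in> borel_measurable M2"
  shows "(\<integral>\<omega>. cis (\<Sum>t\<in>J. a t \<bullet> Y1 t \<omega>) \<partial>M1) = (\<integral>\<omega>. cis (\<Sum>t\<in>J. a t \<bullet> Y2 t \<omega>) \<partial>M2)"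
proof -
  define g where "g = (\<lambda>f::nat \<Rightarrow> real^'p. cis (\<Sum>t\<in>J. a t \<bullet> f t))"
  have g: "g \<in> borel_measurable (PiM J (\<lambda>_. borel))"
    unfolding g_def by (rule measurable_cis_inner_sum) simp
  have r1: "(\<lambda>\<omega>. \<lambda>t\<in>J. Y1 t \<omega>) \<in> M1 \<rightarrow>\<^sub>M PiM J (\<lambda>_. borel)"
    by (rule measurable_restrict) (simp add: m1)
  have r2: "(\<lambda>\<omega>. \<lambda>t\<in>J. Y2 t \<omega>) \<in> M2 \<rightarrow>\<^sub>M PiM J (\<lambda>_. borel)"
    by (rule measurable_restrict) (simp add: m2)
  have "(\<integral>\<omega>. cis (\<Sum>t\<in>J. a t \<bullet> Y1 t \<omega>) \<partial>M1) = (\<integral>\<omega>. g (\<lambda>t\<in>J. Y1 t \<omega>) \<partial>M1)"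
    by (simp add: g_def cong: sum.cong)
  also have "\<dots> = integral\<^sup>L (distr M1 (PiM J (\<lambda>_. borel)) (\<lambda>\<omega>. \<lambda>t\<in>J. Y1 t \<omega>)) g"
    by (rule integral_distr[OF r1 g, symmetric])
  also have "\<dots> = integral\<^sup>L (distr M2 (PiM J (\<lambda>_. borel)) (\<lambda>\<omega>. \<lambda>t\<in>J. Y2 t \<omega>)) g"
    using eq J unfolding stoch_equiv_def by simp
  also have "\<dots> = (\<integral>\<omega>. g (\<lambda>t\<in>J. Y2 t \<omega>) \<partial>M2)"
    by (rule integral_distr[OF r2 g])
  also have "\<dots> = (\<integral>\<omega>. cis (\<Sum>t\<in>J. a t \<bullet> Y2 t \<omega>) \<partial>M2)"
    by (simp add: g_def cong: sum.cong)
  finally show ?thesis .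
qed

lemma noise_gain_scaleR:
  "noise_gain A G C J (\<lambda>t. s *\<^sub>R a t) \<tau> = s *\<^sub>R noise_gain A G C J a \<tau>"
  unfolding noise_gain_def scaleR_sum_right by (intro sum.cong refl) (simp add: matrix_vector_mult_scaleR)

lemma output_functional_mean_scaleR:
  "output_functional_mean A B G C mu J N (\<lambda>t. s *\<^sub>R a t) u = s * output_functional_mean A B G C mu J N a u"
  by (simp add: output_functional_mean_def noise_gain_scaleR sum_distrib_left distrib_left)

lemma output_functional_mean_singleton:
  "output_functional_mean A B G C mu {t} t (\<lambda>_. z) u =
     z \<bullet> (C *v (\<Sum>\<tau><t. mpow A (t - 1 - \<tau>) *v (B *v u \<tau>)))
     + z \<bullet> (\<Sum>j<t. (C ** mpow A j ** G) *v mu)"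
proof -
  have "(\<Sum>\<tau><t. noise_gain A G C {t} (\<lambda>_. z) \<tau> \<bullet> mu) = z \<bullet> (\<Sum>\<tau><t. (C ** mpow A (t - 1 - \<tau>) ** G) *v mu)"
    by (simp add: noise_gain_def inner_sum_right dot_lmul_matrix)
  also have "\<dots> = z \<bullet> (\<Sum>j<t. (C ** mpow A j ** G) *v mu)"
    by (simp only: sum_lessThan_reflect[where f = "\<lambda>j. (C ** mpow A j ** G) *v mu"])
  finally show ?thesis
    by (simp add: output_functional_mean_def)
qed

lemma noise_gain_add:
  "noise_gain A G C J (\<lambda>t. a t + a' t) \<tau> = noise_gain A G C J a \<tau> + noise_gain A G C J a' \<tau>"
  unfolding noise_gain_def sum.distrib[symmetric]
  by (intro sum.cong refl) (simp add: matrix_vector_right_distrib)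

lemma output_functional_var_add:
  assumes "transpose Psi = Psi"
  shows "output_functional_var A G C Psi J N (\<lambda>t. a t + a' t) =
     output_functional_var A G C Psi J N a + output_functional_var A G C Psi J N a'
     + 2 * noise_gain_cross A G C J N a a' + 2 * (\<Sum>t\<in>J. a t \<bullet> (Psi *v a' t))"
proof -
  let ?g = "noise_gain A G C J"
  have noise: "?g (\<lambda>t. a t + a' t) \<tau> \<bullet> ?g (\<lambda>t. a t + a' t) \<tau> =
     ?g a \<tau> \<bullet> ?g a \<tau> + ?g a' \<tau> \<bullet> ?g a' \<tau> + 2 * (?g a \<tau> \<bullet> ?g a' \<tau>)" for \<tau>
    unfolding noise_gain_add by (simp add: inner_add_left inner_add_right inner_commute)
  have meas: "(a t + a' t) \<bullet> (Psi *v (a t + a' t)) =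
     a t \<bullet> (Psi *v a t) + a' t \<bullet> (Psi *v a' t) + 2 * (a t \<bullet> (Psi *v a' t))" for t
    using symmetric_matrix_inner_swap[OF assms, of "a' t" "a t"]
    by (simp add: matrix_vector_right_distrib inner_add_left inner_add_right)
  show ?thesis
    unfolding output_functional_var_def noise_gain_cross_def noise meas
    by (simp add: sum.distrib sum_distrib_left)
qed

lemma noise_gain_delta:
  assumes "finite J" "s \<in> J"
  shows "noise_gain A G C J (\<lambda>r. if r = s then x else 0) \<tau> =
     (if \<tau> < s then transpose (C ** mpow A (s - 1 - \<tau>) ** G) *v x else 0)"
proof -
  have "noise_gain A G C J (\<lambda>r. if r = s then x else 0) \<tau> =
     (\<Sum>r\<in>J. if r = s then (if \<tau> < s then transpose (C ** mpow A (s - 1 - \<tau>) ** G) *v x else 0) else 0)"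
    unfolding noise_gain_def by (rule sum.cong) auto
  then show ?thesis
    using assms by (simp add: sum.delta)
qed

lemma noise_gain_cross_delta:
  assumes J: "finite J" "s \<in> J" "s + d \<in> J" and N: "s + d \<le> N"
  shows "noise_gain_cross A G C J N (\<lambda>r. if r = s then x else 0) (\<lambda>r. if r = s + d then y else 0) =
    (\<Sum>j<s. x \<bullet> ((C ** mpow A j ** G ** transpose (C ** mpow A (j + d) ** G)) *v y))"
proof -
  let ?Q = "\<lambda>j. C ** mpow A j ** G"
  have "noise_gain_cross A G C J N (\<lambda>r. if r = s then x else 0) (\<lambda>r. if r = s + d then y else 0) =
    (\<Sum>\<tau><N. if \<tau> < s then (transpose (?Q (s - 1 - \<tau>)) *v x) \<bullet> (transpose (?Q (s + d - 1 - \<tau>)) *v y) else 0)"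
    unfolding noise_gain_cross_def noise_gain_delta[OF J(1,2)] noise_gain_delta[OF J(1,3)]
    by (intro sum.cong refl) auto
  also have "\<dots> = (\<Sum>\<tau><s. (transpose (?Q (s - 1 - \<tau>)) *v x) \<bullet> (transpose (?Q (s - 1 - \<tau> + d)) *v y))"
    using N by (subst sum_lessThan_extend[of s N]) (auto intro!: sum.cong)
  also have "\<dots> = (\<Sum>j<s. (transpose (?Q j) *v x) \<bullet> (transpose (?Q (j + d)) *v y))"
    by (rule sum_lessThan_reflect)
  also have "\<dots> = (\<Sum>j<s. x \<bullet> ((?Q j ** transpose (?Q (j + d))) *v y))"
    by (simp add: dot_lmul_matrix matrix_vector_mul_assoc[symmetric])
  finally show ?thesis .
qed

locale equal_output_charfuns =
  fixes A1 :: "real^'n1^'n1" and B1 :: "real^'m^'n1" and G1 :: "real^'l1^'n1"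
    and C1 :: "real^'n1^'p" and mu1 :: "real^'l1" and Psi1 :: "real^'p^'p"
    and A2 :: "real^'n2^'n2" and B2 :: "real^'m^'n2" and G2 :: "real^'l2^'n2"
    and C2 :: "real^'n2^'p" and mu2 :: "real^'l2" and Psi2 :: "real^'p^'p"
  assumes Psi1_symmetric: "transpose Psi1 = Psi1" and Psi2_symmetric: "transpose Psi2 = Psi2"
    and var_eq: "\<And>J N a. finite J \<Longrightarrow> \<forall>t\<in>J. t \<le> N \<Longrightarrow>
      output_functional_var A1 G1 C1 Psi1 J N a = output_functional_var A2 G2 C2 Psi2 J N a"
    and cis_mean_eq: "\<And>J N a u. finite J \<Longrightarrow> \<forall>t\<in>J. t \<le> N \<Longrightarrow>
      cis (output_functional_mean A1 B1 G1 C1 mu1 J N a u) = cis (output_functional_mean A2 B2 G2 C2 mu2 J N a u)"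

lemma equal_output_charfuns_if_stoch_equiv:
  fixes M1 :: "'a measure" and M2 :: "'b measure"
    and A1 :: "real^'n1^'n1" and B1 :: "real^'m^'n1" and G1 :: "real^'l1^'n1"
    and C1 :: "real^'n1^'p" and mu1 :: "real^'l1" and Psi1 :: "real^'p^'p"
    and w1 :: "nat \<Rightarrow> 'a \<Rightarrow> real^'l1" and nu1 :: "nat \<Rightarrow> 'a \<Rightarrow> real^'p"
    and A2 :: "real^'n2^'n2" and B2 :: "real^'m^'n2" and G2 :: "real^'l2^'n2"
    and C2 :: "real^'n2^'p" and mu2 :: "real^'l2" and Psi2 :: "real^'p^'p"
    and w2 :: "nat \<Rightarrow> 'b \<Rightarrow> real^'l2" and nu2 :: "nat \<Rightarrow> 'b \<Rightarrow> real^'p"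
  assumes noise1: "noise_model M1 mu1 Psi1 w1 nu1"
    and noise2: "noise_model M2 mu2 Psi2 w2 nu2"
    and equiv: "\<And>u. stoch_equiv M1 (output_proc A1 B1 G1 C1 0 u w1 nu1) M2 (output_proc A2 B2 G2 C2 0 u w2 nu2)"
  shows "equal_output_charfuns A1 B1 G1 C1 mu1 Psi1 A2 B2 G2 C2 mu2 Psi2"
proof -
  have m1: "\<And>t. w1 t \<in> borel_measurable M1" "\<And>t. nu1 t \<in> borel_measurable M1"
    using noise1 unfolding noise_model_def by auto
  have m2: "\<And>t. w2 t \<in> borel_measurable M2" "\<And>t. nu2 t \<in> borel_measurable M2"
    using noise2 unfolding noise_model_def by auto
  have charfuns_eq:
    "cis (output_functional_mean A1 B1 G1 C1 mu1 J N a u)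
       * complex_of_real (exp (- output_functional_var A1 G1 C1 Psi1 J N a / 2)) =
     cis (output_functional_mean A2 B2 G2 C2 mu2 J N a u)
       * complex_of_real (exp (- output_functional_var A2 G2 C2 Psi2 J N a / 2))"
    if "finite J" "\<forall>t\<in>J. t \<le> N" for J N a u
    using stoch_equiv_charfun_eq[OF equiv that(1) borel_measurable_output_proc[OF m1]
        borel_measurable_output_proc[OF m2], of a]
    by (simp add: output_functional_charfun[OF noise1 that] output_functional_charfun[OF noise2 that])
  show ?thesis
  proof
    show "transpose Psi1 = Psi1" "transpose Psi2 = Psi2"
      using noise1 noise2 unfolding noise_model_def gaussian_vec_def by blast+
  qed (use cis_mult_exp_eqD[OF charfuns_eq] in auto)
qed

context equal_output_charfuns
begin

lemma mean_eq:
  assumes "finite J" "\<forall>t\<in>J. t \<le> N"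
  shows "output_functional_mean A1 B1 G1 C1 mu1 J N a u = output_functional_mean A2 B2 G2 C2 mu2 J N a u"
  by (rule cis_scaled_eq_imp_eq)
    (use cis_mean_eq[OF assms, of "\<lambda>t. _ *\<^sub>R a t" u] in \<open>simp add: output_functional_mean_scaleR\<close>)

lemma Psi_eq: "Psi1 = Psi2"
proof (rule symmetric_matrix_eq_quadratic[OF Psi1_symmetric Psi2_symmetric])
  fix x :: "real^'p"
  show "x \<bullet> (Psi1 *v x) = x \<bullet> (Psi2 *v x)"
    using var_eq[of "{0}" 0 "\<lambda>_. x"]
    by (simp add: output_functional_var_def noise_gain_cross_def)
qed

lemma noise_mean_response_eq: "(C1 ** mpow A1 t ** G1) *v mu1 = (C2 ** mpow A2 t ** G2) *v mu2"
proof (rule partial_sums_eq_imp_eq)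
  fix t
  have "x \<bullet> (\<Sum>j<t. (C1 ** mpow A1 j ** G1) *v mu1) = x \<bullet> (\<Sum>j<t. (C2 ** mpow A2 j ** G2) *v mu2)" for x
    using mean_eq[of "{t}" t "\<lambda>_. x" "\<lambda>_. 0"] by (simp add: output_functional_mean_singleton)
  then show "(\<Sum>j<t. (C1 ** mpow A1 j ** G1) *v mu1) = (\<Sum>j<t. (C2 ** mpow A2 j ** G2) *v mu2)"
    using vector_eq_ldot by blast
qed

lemma markov_parameter_eq: "C1 ** mpow A1 k ** B1 = C2 ** mpow A2 k ** B2"
proof (rule matrix_eq_bilinear)
  fix x :: "real^'p" and v :: "real^'m"
  define u where "u \<tau> = (if \<tau> = 0 then v else 0)" for \<tau> :: nat
  have impulse: "(\<Sum>\<tau><Suc k. mpow A (Suc k - 1 - \<tau>) *v (B *v u \<tau>)) = mpow A k *v (B *v v)"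
    for A :: "real^'n^'n" and B :: "real^'m^'n"
    unfolding u_def by (subst sum.lessThan_Suc_shift) simp
  have "x \<bullet> (C1 *v (mpow A1 k *v (B1 *v v))) + x \<bullet> (\<Sum>j<Suc k. (C1 ** mpow A1 j ** G1) *v mu1) =
        x \<bullet> (C2 *v (mpow A2 k *v (B2 *v v))) + x \<bullet> (\<Sum>j<Suc k. (C2 ** mpow A2 j ** G2) *v mu2)"
    using mean_eq[of "{Suc k}" "Suc k" "\<lambda>_. x" u] unfolding output_functional_mean_singleton impulse by simp
  then show "x \<bullet> ((C1 ** mpow A1 k ** B1) *v v) = x \<bullet> ((C2 ** mpow A2 k ** B2) *v v)"
    by (simp add: noise_mean_response_eq matrix_vector_mul_assoc matrix_mul_assoc)
qed

lemma noise_gain_cross_eq: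
  assumes "finite J" "\<forall>t\<in>J. t \<le> N"
  shows "noise_gain_cross A1 G1 C1 J N a a' = noise_gain_cross A2 G2 C2 J N a a'"
  using var_eq[OF assms, of "\<lambda>t. a t + a' t"] var_eq[OF assms, of a] var_eq[OF assms, of a']
  unfolding output_functional_var_add[OF Psi1_symmetric] output_functional_var_add[OF Psi2_symmetric] Psi_eq
  by simp

lemma noise_covariance_response_eq:
  "C1 ** mpow A1 k ** G1 ** transpose G1 ** transpose (mpow A1 h) ** transpose C1 =
   C2 ** mpow A2 k ** G2 ** transpose G2 ** transpose (mpow A2 h) ** transpose C2"
proof -
  define Q1 where "Q1 j = C1 ** mpow A1 j ** G1" for j
  define Q2 where "Q2 j = C2 ** mpow A2 j ** G2" for j
  have ordered: "Q1 s ** transpose (Q1 (s + d)) = Q2 s ** transpose (Q2 (s + d))" for s d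
  proof (rule matrix_eq_bilinear)
    fix x y
    have "(\<Sum>j<n. x \<bullet> ((Q1 j ** transpose (Q1 (j + d))) *v y)) = (\<Sum>j<n. x \<bullet> ((Q2 j ** transpose (Q2 (j + d))) *v y))" for n
      using noise_gain_cross_eq[of "{n, n + d}" "n + d" "\<lambda>r. if r = n then x else 0" "\<lambda>r. if r = n + d then y else 0"]
      unfolding Q1_def Q2_def by (simp add: noise_gain_cross_delta)
    then show "x \<bullet> ((Q1 s ** transpose (Q1 (s + d))) *v y) = x \<bullet> ((Q2 s ** transpose (Q2 (s + d))) *v y)"
      by (rule partial_sums_eq_imp_eq[where f = "\<lambda>j. x \<bullet> ((Q1 j ** transpose (Q1 (j + d))) *v y)"])
  qed
  have "Q1 k ** transpose (Q1 h) = Q2 k ** transpose (Q2 h)"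
  proof (cases "k \<le> h")
    case True
    then show ?thesis using ordered[of k "h - k"] by simp
  next
    case False
    then have "transpose (Q1 h ** transpose (Q1 k)) = transpose (Q2 h ** transpose (Q2 k))"
      using ordered[of h "k - h"] by simp
    then show ?thesis by (simp add: matrix_transpose_mul)
  qed
  then show ?thesis
    unfolding Q1_def Q2_def by (simp add: matrix_transpose_mul matrix_mul_assoc)
qed

end

theorem proposition3:
  fixes M1 :: "'a measure" and M2 :: "'b measure"
    and A1 :: "real^'n1^'n1" and B1 :: "real^'m^'n1" and G1 :: "real^'l1^'n1"
    and C1 :: "real^'n1^'p" and mu1 :: "real^'l1" and Psi1 :: "real^'p^'p"
    and w1 :: "nat \<Rightarrow> 'a \<Rightarrow> real^'l1" and nu1 :: "nat \<Rightarrow> 'a \<Rightarrow> real^'p"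
    and A2 :: "real^'n2^'n2" and B2 :: "real^'m^'n2" and G2 :: "real^'l2^'n2"
    and C2 :: "real^'n2^'p" and mu2 :: "real^'l2" and Psi2 :: "real^'p^'p"
    and w2 :: "nat \<Rightarrow> 'b \<Rightarrow> real^'l2" and nu2 :: "nat \<Rightarrow> 'b \<Rightarrow> real^'p"
    and R :: "((real^'n1) \<times> (real^'n2)) set"
  assumes noise1: "noise_model M1 mu1 Psi1 w1 nu1"
    and noise2: "noise_model M2 mu2 Psi2 w2 nu2"
    and R_sub: "subspace R"
    and equiv: "\<forall>x10 x20 (u :: nat \<Rightarrow> real^'m). (x10, x20) \<in> R \<longrightarrow>
        stoch_equiv M1 (output_proc A1 B1 G1 C1 x10 u w1 nu1)
                    M2 (output_proc A2 B2 G2 C2 x20 u w2 nu2)"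
  shows "Psi1 = Psi2 \<and>
    (\<forall>t. C1 ** mpow A1 t ** B1 = C2 ** mpow A2 t ** B2) \<and>
    (\<forall>t. (C1 ** mpow A1 t ** G1) *v mu1 = (C2 ** mpow A2 t ** G2) *v mu2) \<and>
    (\<forall>h k. C1 ** mpow A1 k ** G1 ** transpose G1 ** transpose (mpow A1 h) ** transpose C1 =
               C2 ** mpow A2 k ** G2 ** transpose G2 ** transpose (mpow A2 h) ** transpose C2)"
proof -
  have zero_state_equiv: "stoch_equiv M1 (output_proc A1 B1 G1 C1 0 u w1 nu1) M2 (output_proc A2 B2 G2 C2 0 u w2 nu2)"
    for u
    using equiv subspace_0[OF R_sub] by (simp add: zero_prod_def)
  interpret equal_output_charfuns A1 B1 G1 C1 mu1 Psi1 A2 B2 G2 C2 mu2 Psi2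
    by (rule equal_output_charfuns_if_stoch_equiv[OF noise1 noise2 zero_state_equiv])
  show ?thesis
    using Psi_eq markov_parameter_eq noise_mean_response_eq noise_covariance_response_eq by blast
qed

end
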